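(* Let $n \ge 2$ be an integer and $p_0 = \frac{n\log n - (n-1)\log(n-1)}{\log n}$. Then for every $n\times n$ matrix $A=(a_{ij})$ with nonnegative entries and all row sums equal to $1$, $$\mathrm{per}\left(\left(a_{ij}^{1/p_0}\right)_{i,j}\right) \le 1.$$
   Context: $\mathrm{per}(B)=\sum_{\sigma\in S_n}\prod_{i=1}^n b_{i\sigma(i)}$ is the permanent of an $n\times n$ matrix $B$. *)

theory Defs
  imports "HOL-Analysis.Analysis" "HOL-Combinatorics.Permutations"
begin

definition per :: "nat \<Rightarrow> (nat \<Rightarrow> nat \<Rightarrow> real) \<Rightarrow> real" where
  "per n B = (\<Sum>\<sigma> | \<sigma> permutes {0..<n}. \<Prod>i<n. B i (\<sigma> i))"

end

theory Submission
  imports Defs "HOL-Real_Asymp.Real_Asymp"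
begin

text \<open>
  Expanding the permanent along a column and inducting on the number of rows reduces the theorem
  to the inequality
    sum_i (d_i prod_(k ~= i) (r_k - d_k))^(1/p0) <= prod_k r_k^(1/p0)   (0 <= d_k <= r_k),
  with at most n factors, and after scaling to sum_i T_i^(1/p0) <= 1 for
  T_i = c_i prod_(k ~= i) (1 - c_k) with 0 <= c_k <= 1.
  Put g = sum_i T_i^(1/p0) and theta_i = T_i^(1/p0) / g. Gibbs' inequality for the pairs
  (theta_i, 1 - theta_i) and (c_i, 1 - c_i) gives p0 ln g <= - sum_i F(theta_i), where
  F(t) = (p0 - 1) t ln t - (1 - t) ln (1 - t).
  The exponent p0 is exactly the one for which sum_i F(theta_i) >= 0 holds for all probability
  vectors theta with at most n entries, with equality at the uniform vector. To see this, note that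
  F is convex on [0, s] and concave on [s, 1] for s = (p0 - 1) / p0: gathering the mass above s
  into the largest entry and spreading the rest evenly reduces the claim to vectors
  (B, (1 - B)/(n - 1), ..., (1 - B)/(n - 1)), where it is a one-variable calculus fact.
\<close>

lemma concave_on_nonneg_if_tendsto_0:
  fixes f :: "real \<Rightarrow> real"
  assumes conc: "concave_on {a..<b} f" and "0 \<le> f a" and lim: "(f \<longlongrightarrow> 0) (at_left b)"
    and x: "a \<le> x" "x < b"
  shows "0 \<le> f x"
proof -
  have "min 0 (f t) \<le> f x" if t: "x < t" "t < b" for t
  proof -
    define w where "w = (x - a) / (t - a)"
    have w: "0 \<le> w" "w \<le> 1"
      using x t by (auto simp: w_def divide_le_eq_1)
    have "(1 - w) *\<^sub>R a + w *\<^sub>R t = x"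
      using x t by (simp add: w_def divide_simps) (simp add: algebra_simps)
    then have "(1 - w) * f a + w * f t \<le> f x"
      using concave_onD[OF conc w, of a t] x t by simp
    moreover have "0 \<le> (1 - w) * f a"
      using w \<open>0 \<le> f a\<close> by simp
    moreover have "min 0 (f t) \<le> w * f t"
    proof (cases "0 \<le> f t")
      case False
      then have "(1 - w) * f t \<le> 0"
        using w by (intro mult_nonneg_nonpos) auto
      then show ?thesis
        by (simp add: algebra_simps)
    qed (use w in simp)
    ultimately show ?thesis
      by linarith
  qed
  then have "\<forall>\<^sub>F t in at_left b. min 0 (f t) \<le> f x"
    using eventually_at_left_real[OF x(2)] by (auto elim: eventually_mono)
  moreover have "((\<lambda>t. min 0 (f t)) \<longlongrightarrow> min 0 0) (at_left b)"
    by (intro tendsto_intros lim)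
  ultimately show ?thesis
    by (intro tendsto_upperbound) auto
qed

lemma concave_on_gather_excess:
  fixes f :: "real \<Rightarrow> real"
  assumes conc: "concave_on {a..b} f" and "a \<le> M" and x: "\<forall>i\<in>J. x i \<le> M"
    and b: "b = M + (\<Sum>i\<in>J. x i - min (x i) a)"
  shows "f b + (\<Sum>i\<in>J. f (min (x i) a)) \<le> f M + (\<Sum>i\<in>J. f (x i))"
proof -
  define k where "k = (f b - f a) / (b - a)"
  have "M \<le> b"
    unfolding b by (auto intro: sum_nonneg)
  have chord: "f a + k * (u - a) \<le> f u" if "u \<in> {a..b}" for u
    using concave_onD_Icc'[OF conc that] by (simp add: k_def mult.commute)
  have "f (min (x i) a) + k * (x i - min (x i) a) \<le> f (x i)" if "i \<in> J" for i
    using chord[of "x i"] x that \<open>M \<le> b\<close> by (cases "x i \<le> a") auto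
  then have "(\<Sum>i\<in>J. f (min (x i) a)) + k * (b - M) \<le> (\<Sum>i\<in>J. f (x i))"
    unfolding b using sum_mono[of J "\<lambda>i. f (min (x i) a) + k * (x i - min (x i) a)" "\<lambda>i. f (x i)"]
    by (simp add: sum.distrib sum_distrib_left)
  moreover have "f a + k * (M - a) \<le> f M"
    using chord \<open>a \<le> M\<close> \<open>M \<le> b\<close> by simp
  moreover have "f a + k * (b - a) = f b"
    by (cases "b = a") (simp_all add: k_def)
  moreover have "k * (b - a) = k * (M - a) + k * (b - M)"
    by (simp add: algebra_simps)
  ultimately show ?thesis
    by linarith
qed

text \<open>
  Jensen's inequality, in supporting-line form, for the K points t i (i \<in> J) padded with
  K - card J zeros.
\<close>

lemma sum_ge_by_tangent:
  fixes f :: "real \<Rightarrow> real"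
  assumes tangent: "\<And>u. u \<in> A \<Longrightarrow> f y + d * (u - y) \<le> f u"
    and "0 \<in> A" "f 0 = 0" and "finite J" "\<forall>i\<in>J. t i \<in> A"
    and "real (card J) \<le> K" and "sum t J = K * y"
  shows "K * f y \<le> (\<Sum>i\<in>J. f (t i))"
proof -
  have "f y - d * y \<le> 0"
    using tangent[OF \<open>0 \<in> A\<close>] \<open>f 0 = 0\<close> by simp
  then have "(K - real (card J)) * (f y - d * y) \<le> 0"
    using \<open>real (card J) \<le> K\<close> by (intro mult_nonneg_nonpos) auto
  then have "K * f y \<le> real (card J) * (f y - d * y) + d * (K * y)"
    by (simp add: algebra_simps)
  also have "\<dots> = real (card J) * f y + d * (sum t J - real (card J) * y)"
    using \<open>sum t J = K * y\<close> by (simp add: algebra_simps)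
  also have "\<dots> = (\<Sum>i\<in>J. f y + d * (t i - y))"
    by (simp add: sum.distrib sum_subtractf flip: sum_distrib_left)
  also have "\<dots> \<le> (\<Sum>i\<in>J. f (t i))"
    using assms by (intro sum_mono tangent) auto
  finally show ?thesis .
qed

section \<open>The entropy gap\<close>

definition entropy_gap :: "real \<Rightarrow> real \<Rightarrow> real" where
  "entropy_gap c t = c * (t * ln t) - (1 - t) * ln (1 - t)"

definition entropy_gap' :: "real \<Rightarrow> real \<Rightarrow> real" where
  "entropy_gap' c t = c * (ln t + 1) + ln (1 - t) + 1"

definition entropy_gap'' :: "real \<Rightarrow> real \<Rightarrow> real" where
  "entropy_gap'' c t = c / t - 1 / (1 - t)"

lemma entropy_gap_0 [simp]: "entropy_gap c 0 = 0"
  and entropy_gap_1 [simp]: "entropy_gap c 1 = 0"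
  by (simp_all add: entropy_gap_def)

lemma has_real_derivative_entropy_gap:
  "0 < t \<Longrightarrow> t < 1 \<Longrightarrow> (entropy_gap c has_real_derivative entropy_gap' c t) (at t)"
  unfolding entropy_gap_def entropy_gap'_def
  by (rule derivative_eq_intros refl | simp)+

lemma has_real_derivative_entropy_gap':
  "0 < t \<Longrightarrow> t < 1 \<Longrightarrow> (entropy_gap' c has_real_derivative entropy_gap'' c t) (at t)"
  unfolding entropy_gap'_def entropy_gap''_def
  by (rule derivative_eq_intros refl | simp)+

lemma entropy_gap''_eq:
  "0 < t \<Longrightarrow> t < 1 \<Longrightarrow> entropy_gap'' c t = (c - (1 + c) * t) / (t * (1 - t))"
  by (simp add: entropy_gap''_def field_simps)

lemma entropy_gap_tendsto_0: "(entropy_gap c \<longlongrightarrow> 0) (at_right 0)"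
  unfolding entropy_gap_def by real_asymp

lemma entropy_gap_above_tangent_pos:
  assumes "0 < c" "0 < y" "y \<le> c / (1 + c)" "0 < u" "u \<le> c / (1 + c)"
  shows "entropy_gap c y + entropy_gap' c y * (u - y) \<le> entropy_gap c u"
proof -
  let ?C = "{0<..c / (1 + c)}"
  have "c / (1 + c) < 1"
    using assms by simp
  have "entropy_gap' c y * (u - y) \<le> entropy_gap c u - entropy_gap c y"
  proof (rule f''_imp_f'[where f'' = "entropy_gap'' c"])
    fix x assume "x \<in> ?C"
    then have "0 < x" "x \<le> c / (1 + c)"
      by auto
    moreover have "x < 1"
      using \<open>x \<le> c / (1 + c)\<close> \<open>c / (1 + c) < 1\<close> by linarith
    ultimately have x: "0 < x" "x < 1" "x * (1 + c) \<le> c"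
      using assms(1) by (simp_all add: pos_le_divide_eq)
    show "(entropy_gap c has_real_derivative entropy_gap' c x) (at x)"
      "(entropy_gap' c has_real_derivative entropy_gap'' c x) (at x)"
      using x by (auto intro: has_real_derivative_entropy_gap has_real_derivative_entropy_gap')
    show "0 \<le> entropy_gap'' c x"
      using x by (simp add: entropy_gap''_eq algebra_simps)
  qed (use assms in auto)
  then show ?thesis
    by simp
qed

lemma entropy_gap_above_tangent:
  assumes "0 < c" "0 < y" "y \<le> c / (1 + c)" "0 \<le> t" "t \<le> c / (1 + c)"
  shows "entropy_gap c y + entropy_gap' c y * (t - y) \<le> entropy_gap c t"
proof (cases "t = 0")
  case False
  then show ?thesis
    using entropy_gap_above_tangent_pos assms by simp
next
  case True
  let ?g = "\<lambda>u. entropy_gap c u - entropy_gap' c y * (u - y)"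
  have "(?g \<longlongrightarrow> 0 - entropy_gap' c y * (0 - y)) (at_right 0)"
    by (intro tendsto_intros entropy_gap_tendsto_0)
  moreover have "\<forall>\<^sub>F u in at_right 0. entropy_gap c y \<le> ?g u"
    using eventually_at_right_real[OF order.strict_trans2[OF assms(2,3)]]
  proof eventually_elim
    case (elim u)
    then show ?case
      using entropy_gap_above_tangent_pos[OF assms(1-3), of u] by simp
  qed
  ultimately have "entropy_gap c y \<le> 0 - entropy_gap' c y * (0 - y)"
    by (rule tendsto_lowerbound) simp
  then show ?thesis
    using True by simp
qed

lemma entropy_gap_concave_on:
  assumes "0 < c"
  shows "concave_on {c / (1 + c)..<1} (entropy_gap c)"
proof (rule f''_le0_imp_concave[where f' = "entropy_gap' c" and f'' = "entropy_gap'' c"])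
  fix x assume "x \<in> {c / (1 + c)..<1}"
  then have x: "0 < x" "x < 1" "c \<le> x * (1 + c)"
    using assms by (auto simp: pos_divide_le_eq intro: order.strict_trans2[of 0 "c / (1 + c)"])
  show "(entropy_gap c has_real_derivative entropy_gap' c x) (at x)"
    "(entropy_gap' c has_real_derivative entropy_gap'' c x) (at x)"
    using x by (auto intro: has_real_derivative_entropy_gap has_real_derivative_entropy_gap')
  show "entropy_gap'' c x \<le> 0"
    using x by (simp add: entropy_gap''_eq divide_le_0_iff algebra_simps)
qed simp

definition two_level_gap :: "real \<Rightarrow> real \<Rightarrow> real \<Rightarrow> real" where
  "two_level_gap N c z = entropy_gap c z + (N - 1) * entropy_gap c ((1 - z) / (N - 1))"

definition two_level_gap' :: "real \<Rightarrow> real \<Rightarrow> real \<Rightarrow> real" where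
  "two_level_gap' N c z = entropy_gap' c z - entropy_gap' c ((1 - z) / (N - 1))"

lemma has_real_derivative_two_level_gap:
  assumes "2 < N" "0 < z" "z < 1"
  shows "(two_level_gap N c has_real_derivative two_level_gap' N c z) (at z)"
proof -
  have "0 < (1 - z) / (N - 1)" "(1 - z) / (N - 1) < 1"
    using assms by (auto simp: field_simps)
  from DERIV_chain2[OF has_real_derivative_entropy_gap[OF this]
      DERIV_cdivide[OF DERIV_diff[OF DERIV_const DERIV_ident]]]
  have "((\<lambda>z. entropy_gap c ((1 - z) / (N - 1))) has_real_derivative
      entropy_gap' c ((1 - z) / (N - 1)) * ((0 - 1) / (N - 1))) (at z)" .
  from DERIV_add[OF has_real_derivative_entropy_gap[OF assms(2,3)]
      DERIV_cmult[OF this, where c = "N - 1"]]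
  show ?thesis
    using assms unfolding two_level_gap_def two_level_gap'_def by simp
qed

lemma has_real_derivative_two_level_gap':
  assumes "2 < N" "0 < z" "z < 1"
  shows "(two_level_gap' N c has_real_derivative
    (c * (N - 2) - (N - 1 - c) * z) / (z * (1 - z) * (N - 2 + z))) (at z)"
proof -
  have nz: "z \<noteq> 0" "1 - z \<noteq> 0" "N - 2 + z \<noteq> 0" "N - 1 \<noteq> 0"
    using assms by auto
  have "0 < (1 - z) / (N - 1)" "(1 - z) / (N - 1) < 1"
    using assms by (auto simp: field_simps)
  from DERIV_diff[OF has_real_derivative_entropy_gap'[OF assms(2,3)]
      DERIV_chain2[OF has_real_derivative_entropy_gap'[OF this]
        DERIV_cdivide[OF DERIV_diff[OF DERIV_const DERIV_ident]]]]
  have "(two_level_gap' N c has_real_derivative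
      entropy_gap'' c z + entropy_gap'' c ((1 - z) / (N - 1)) / (N - 1)) (at z)"
    unfolding two_level_gap'_def by simp
  moreover have "1 - (1 - z) / (N - 1) = (N - 2 + z) / (N - 1)"
    using nz by (simp add: field_simps)
  then have "entropy_gap'' c ((1 - z) / (N - 1)) / (N - 1) = c / (1 - z) - 1 / (N - 2 + z)"
    using nz by (simp add: entropy_gap''_def divide_simps) (simp add: algebra_simps)
  then have "entropy_gap'' c z + entropy_gap'' c ((1 - z) / (N - 1)) / (N - 1)
      = (c * (N - 2) - (N - 1 - c) * z) / (z * (1 - z) * (N - 2 + z))"
    using nz by (simp add: entropy_gap''_def divide_simps) (simp add: algebra_simps)
  ultimately show ?thesis
    by simp
qed

lemma two_level_gap_uniform:
  assumes "2 < N"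
  shows "two_level_gap N c (1 / N) = N * entropy_gap c (1 / N)"
    and "two_level_gap' N c (1 / N) = 0"
proof -
  have "(1 - 1 / N) / (N - 1) = 1 / N"
    using assms by (simp add: field_simps)
  then show "two_level_gap N c (1 / N) = N * entropy_gap c (1 / N)" "two_level_gap' N c (1 / N) = 0"
    by (simp_all add: two_level_gap_def two_level_gap'_def algebra_simps)
qed

lemma two_level_gap_nonneg_below:
  assumes N: "2 < N" and c: "0 < c" "c < N - 1" and uniform: "entropy_gap c (1 / N) = 0"
    and z: "1 / N \<le> z" "z \<le> c * (N - 2) / (N - 1 - c)" "z < 1"
  shows "0 \<le> two_level_gap N c z"
proof -
  let ?C = "{0<..<1} \<inter> {..c * (N - 2) / (N - 1 - c)}"
  have "0 < 1 / N" "1 / N < 1"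
    using N by simp_all
  moreover have "0 < z"
    using \<open>0 < 1 / N\<close> z(1) by linarith
  ultimately have "1 / N \<in> ?C" "z \<in> ?C"
    using z by auto
  have "two_level_gap' N c (1 / N) * (z - 1 / N) \<le> two_level_gap N c z - two_level_gap N c (1 / N)"
  proof (rule f''_imp_f'[where f' = "two_level_gap' N c"])
    fix x assume x: "x \<in> ?C"
    then show "(two_level_gap N c has_real_derivative two_level_gap' N c x) (at x)"
      "(two_level_gap' N c has_real_derivative
        (c * (N - 2) - (N - 1 - c) * x) / (x * (1 - x) * (N - 2 + x))) (at x)"
      using N by (auto intro: has_real_derivative_two_level_gap has_real_derivative_two_level_gap')
    have "(N - 1 - c) * x \<le> c * (N - 2)"
      using x c by (simp add: pos_le_divide_eq mult.commute)
    then show "0 \<le> (c * (N - 2) - (N - 1 - c) * x) / (x * (1 - x) * (N - 2 + x))"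
      using x N by simp
  qed (fact | intro convex_Int convex_real_interval)+
  then show ?thesis
    using two_level_gap_uniform[OF N] uniform by simp
qed

lemma two_level_gap_concave_on:
  assumes N: "2 < N" and c: "0 < c" "c < N - 1"
  shows "concave_on {c * (N - 2) / (N - 1 - c)..<1} (two_level_gap N c)"
proof (rule f''_le0_imp_concave[where f' = "two_level_gap' N c"])
  fix x assume x: "x \<in> {c * (N - 2) / (N - 1 - c)..<1}"
  moreover have "0 < c * (N - 2) / (N - 1 - c)"
    using N c by simp
  ultimately have "0 < x" "x < 1"
    by auto
  then show "(two_level_gap N c has_real_derivative two_level_gap' N c x) (at x)"
    "(two_level_gap' N c has_real_derivative
      (c * (N - 2) - (N - 1 - c) * x) / (x * (1 - x) * (N - 2 + x))) (at x)"
    using N by (auto intro: has_real_derivative_two_level_gap has_real_derivative_two_level_gap')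
  have "c * (N - 2) \<le> (N - 1 - c) * x"
    using x c by (simp add: pos_divide_le_eq mult.commute)
  then show "(c * (N - 2) - (N - 1 - c) * x) / (x * (1 - x) * (N - 2 + x)) \<le> 0"
    using \<open>0 < x\<close> \<open>x < 1\<close> N by (simp add: divide_le_0_iff)
qed simp

lemma two_level_gap_tendsto_1: "2 < N \<Longrightarrow> (two_level_gap N c \<longlongrightarrow> 0) (at_left 1)"
  unfolding two_level_gap_def entropy_gap_def by real_asymp

lemma two_level_gap_nonneg:
  assumes N: "2 < N" and c: "0 < c" "c < N - 1" "1 \<le> c * (N - 1)"
    and uniform: "entropy_gap c (1 / N) = 0" and B: "1 / N \<le> B" "B \<le> 1"
  shows "0 \<le> two_level_gap N c B"
proof -
  define s where "s = c * (N - 2) / (N - 1 - c)"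
  have "0 \<le> (c * (N - 1) - 1) * (N - 1)"
    using N c by simp
  then have "1 / N \<le> s"
    using N c by (simp add: s_def field_simps)
  consider "B = 1" | "B \<le> s" "B < 1" | "s < B" "B < 1"
    using B by linarith
  then show ?thesis
  proof cases
    case 1
    then show ?thesis
      by (simp add: two_level_gap_def)
  next
    case 2
    then show ?thesis
      using two_level_gap_nonneg_below[OF N c(1,2) uniform] B by (simp add: s_def)
  next
    case 3
    then show ?thesis
      using concave_on_nonneg_if_tendsto_0[OF two_level_gap_concave_on[OF N c(1,2)] _
          two_level_gap_tendsto_1[OF N]]
        two_level_gap_nonneg_below[OF N c(1,2) uniform \<open>1 / N \<le> s\<close>[unfolded s_def]]
      by (simp add: s_def)
  qed
qed

section \<open>The critical exponent\<close>

text \<open>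
  The exponent of the theorem is 1 + critical_coeff n. It is the value of c for which
  entropy_gap c vanishes at 1/n, i.e. for which the uniform probability vector on n points
  is extremal.
\<close>

definition critical_coeff :: "nat \<Rightarrow> real" where
  "critical_coeff n = (real n - 1) * (ln (real n) - ln (real n - 1)) / ln (real n)"

lemma critical_coeff_pos: "2 \<le> n \<Longrightarrow> 0 < critical_coeff n"
  by (simp add: critical_coeff_def)

lemma entropy_gap_critical_coeff_uniform:
  assumes "2 \<le> n"
  shows "entropy_gap (critical_coeff n) (1 / real n) = 0"
proof -
  define N where "N = real n"
  have N: "2 \<le> N"
    using assms by (simp add: N_def)
  have "1 - 1 / N = (N - 1) / N"
    using N by (simp add: field_simps)
  then have "entropy_gap (critical_coeff n) (1 / N)
      = - (critical_coeff n * ln N) / N - (1 - 1 / N) * (ln (N - 1) - ln N)"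
    using N by (simp add: entropy_gap_def ln_div)
  also have "critical_coeff n * ln N = (N - 1) * (ln N - ln (N - 1))"
    using N by (simp add: critical_coeff_def N_def)
  finally show ?thesis
    using N by (simp add: N_def[symmetric] field_simps)
qed

lemma ln_le_sub_two_add_inverse:
  fixes x :: real
  assumes "3 \<le> x"
  shows "ln x \<le> x - 2 + 1 / x"
proof -
  have "4 / 3 \<le> exp (1 / 3 :: real)"
    using exp_ge_add_one_self[of "1 / 3 :: real"] by simp
  then have "(4 / 3) ^ 4 \<le> exp (1 / 3 :: real) ^ 4"
    by (rule power_mono) simp
  moreover have "(4 / 3 :: real) ^ 4 = 256 / 81"
    by (simp add: power_divide)
  ultimately have "3 \<le> exp (4 / 3 :: real)"
    by (simp add: exp_of_nat_mult[symmetric])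
  then have ln3: "ln 3 \<le> (4 / 3 :: real)"
    using ln_le_cancel_iff[of 3 "exp (4 / 3)"] by simp
  have "(\<lambda>x. x - 2 + 1 / x - ln x) 3 \<le> (\<lambda>x. x - 2 + 1 / x - ln x) x"
  proof (rule DERIV_nonneg_imp_nondecreasing[OF assms])
    fix z :: real assume z: "3 \<le> z" "z \<le> x"
    have "((\<lambda>x. x - 2 + 1 / x - ln x) has_real_derivative (1 - 1 / z\<^sup>2 - 1 / z)) (at z)"
      using z by (auto intro!: derivative_eq_intros simp: power2_eq_square field_simps)
    moreover have "1 / z \<le> 1 / 3"
      using z by (simp add: frac_le)
    moreover have "1 / z\<^sup>2 \<le> 1 / 3\<^sup>2"
      using z by (intro divide_left_mono power_mono) auto
    ultimately show "\<exists>y. ((\<lambda>x. x - 2 + 1 / x - ln x) has_real_derivative y) (at z) \<and> 0 \<le> y"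
      by auto
  qed
  then show ?thesis
    using ln3 by simp
qed

lemma one_le_critical_coeff_mult:
  assumes "2 \<le> n"
  shows "1 \<le> critical_coeff n * (real n - 1)"
proof (cases "n = 2")
  case True
  then show ?thesis
    by (simp add: critical_coeff_def)
next
  case False
  define N where "N = real n"
  have N: "3 \<le> N"
    using assms False by (simp add: N_def)
  have "1 - 1 / N = (N - 1) / N"
    using N by (simp add: field_simps)
  then have "ln (N - 1) - ln N \<le> - 1 / N"
    using ln_le_minus_one[of "1 - 1 / N"] N by (simp add: ln_div)
  then have gap: "1 / N \<le> ln N - ln (N - 1)"
    by simp
  have "ln N \<le> (N - 1)\<^sup>2 * (1 / N)"
    using ln_le_sub_two_add_inverse[OF N] N by (simp add: power2_eq_square field_simps)
  also have "\<dots> \<le> (N - 1)\<^sup>2 * (ln N - ln (N - 1))"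
    using gap by (rule mult_left_mono) simp
  finally have "ln N \<le> (N - 1)\<^sup>2 * (ln N - ln (N - 1))" .
  then show ?thesis
    using N by (simp add: critical_coeff_def N_def[symmetric] power2_eq_square field_simps)
qed

lemma critical_coeff_less:
  assumes "3 \<le> n"
  shows "critical_coeff n < real n - 1"
proof -
  define N where "N = real n"
  have N: "3 \<le> N"
    using assms by (simp add: N_def)
  have "ln (N / (N - 1)) \<le> N / (N - 1) - 1"
    using N by (intro ln_le_minus_one) simp
  then have gap: "ln N - ln (N - 1) \<le> 1 / (N - 1)"
    using N by (simp add: ln_div field_simps)
  have "ln (1 / N) \<le> 1 / N - 1"
    using N by (intro ln_le_minus_one) simp
  then have "1 - 1 / N \<le> ln N"
    using N by (simp add: ln_div)
  moreover have "2 / 3 \<le> 1 - 1 / N"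
    using N by (simp add: field_simps)
  ultimately have "2 / 3 \<le> ln N"
    by linarith
  have "critical_coeff n \<le> (N - 1) * (1 / (N - 1)) / ln N"
    unfolding critical_coeff_def N_def[symmetric]
    using gap N \<open>2 / 3 \<le> ln N\<close> by (intro divide_right_mono mult_left_mono) auto
  also have "\<dots> \<le> 3 / 2"
    using N \<open>2 / 3 \<le> ln N\<close> by (simp add: field_simps)
  finally show ?thesis
    using N by (simp add: N_def)
qed

lemma two_level_gap_critical_nonneg:
  assumes "2 \<le> n" and "1 / real n \<le> B" "B \<le> 1"
  shows "0 \<le> two_level_gap (real n) (critical_coeff n) B"
proof (cases "n = 2")
  case True
  then have "critical_coeff n = 1"
    by (simp add: critical_coeff_def)
  then show ?thesis
    using True by (simp add: two_level_gap_def entropy_gap_def)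
next
  case False
  then show ?thesis
    using assms two_level_gap_nonneg[OF _ critical_coeff_pos critical_coeff_less
        one_le_critical_coeff_mult entropy_gap_critical_coeff_uniform]
    by simp
qed

lemma sum_entropy_gap_ge_spread:
  assumes "0 < c" "finite J" "\<forall>i\<in>J. 0 \<le> t i \<and> t i \<le> c / (1 + c)"
    and "real (card J) \<le> K" "0 < sum t J"
  shows "K * entropy_gap c (sum t J / K) \<le> (\<Sum>i\<in>J. entropy_gap c (t i))"
proof -
  define s where "s = c / (1 + c)"
  define y where "y = sum t J / K"
  have "J \<noteq> {}"
    using \<open>0 < sum t J\<close> by auto
  then have "1 \<le> real (card J)"
    using assms(2) by (simp add: Suc_le_eq card_gt_0_iff)
  then have "1 \<le> K"
    using assms(4) by linarith
  have "sum t J \<le> real (card J) * s"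
    using sum_mono[of J t "\<lambda>_. s"] assms(3) by (simp add: s_def)
  also have "\<dots> \<le> K * s"
    using assms(1,4) by (intro mult_right_mono) (auto simp: s_def)
  finally have "0 < y" "y \<le> s"
    using \<open>0 < sum t J\<close> \<open>1 \<le> K\<close> by (simp_all add: y_def pos_divide_le_eq mult.commute)
  show ?thesis
    using entropy_gap_above_tangent[OF \<open>0 < c\<close> \<open>0 < y\<close>] \<open>y \<le> s\<close> \<open>0 < y\<close> \<open>1 \<le> K\<close> assms(2-4)
    by (intro sum_ge_by_tangent[where A = "{0..s}" and d = "entropy_gap' c y", folded y_def])
      (auto simp: s_def y_def)
qed

lemma entropy_gap_reduce_to_two_level:
  assumes "0 < c" and J: "finite J" "real (card J) \<le> N - 1"
    and \<theta>: "\<forall>i\<in>J. 0 \<le> \<theta> i \<and> \<theta> i \<le> M" "M + sum \<theta> J = 1" and "M < 1"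
  shows "\<exists>B. M \<le> B \<and> B < 1 \<and> two_level_gap N c B \<le> entropy_gap c M + (\<Sum>i\<in>J. entropy_gap c (\<theta> i))"
proof -
  define F where "F = entropy_gap c"
  define s where "s = c / (1 + c)"
  define t where "t i = min (\<theta> i) s" for i
  define B where "B = M + (\<Sum>i\<in>J. \<theta> i - t i)"
  have t: "\<forall>i\<in>J. 0 \<le> t i \<and> t i \<le> s"
    using \<theta> \<open>0 < c\<close> by (simp add: t_def s_def)
  have "sum t J = 1 - B"
    using \<theta>(2) by (simp add: B_def sum_subtractf)
  have "M \<le> B"
    by (auto simp: B_def t_def intro: sum_nonneg)
  have "\<exists>i\<in>J. 0 < \<theta> i"
  proof (rule ccontr)
    assume "\<not> (\<exists>i\<in>J. 0 < \<theta> i)"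
    then have "sum \<theta> J = 0"
      using \<theta>(1) by (force intro: sum.neutral)
    then show False
      using \<theta>(2) \<open>M < 1\<close> by simp
  qed
  then obtain i where "i \<in> J" "0 < \<theta> i"
    by blast
  then have "0 < sum t J"
    using t \<open>0 < c\<close> J by (intro sum_pos2[of J i]) (auto simp: t_def s_def)
  then have "B < 1"
    using \<open>sum t J = 1 - B\<close> by simp
  have gather: "F B + (\<Sum>i\<in>J. F (t i)) \<le> F M + (\<Sum>i\<in>J. F (\<theta> i))"
  proof (cases "s \<le> M")
    case True
    have "{s..B} \<subseteq> {s..<1}"
      using \<open>B < 1\<close> by auto
    have "concave_on {s..B} F"
      using entropy_gap_concave_on[OF \<open>0 < c\<close>] \<open>{s..B} \<subseteq> {s..<1}\<close>
      unfolding concave_on_def F_def s_def by (rule convex_on_subset) simp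
    then show ?thesis
      using \<theta> True unfolding t_def by (intro concave_on_gather_excess) (auto simp: B_def t_def)
  next
    case False
    then have "t i = \<theta> i" if "i \<in> J" for i
      using \<theta> that by (force simp: t_def)
    then show ?thesis
      by (simp add: B_def)
  qed
  have spread: "(N - 1) * F ((1 - B) / (N - 1)) \<le> (\<Sum>i\<in>J. F (t i))"
    using sum_entropy_gap_ge_spread[OF \<open>0 < c\<close> J(1) _ J(2) \<open>0 < sum t J\<close>] t \<open>sum t J = 1 - B\<close>
    by (simp add: F_def s_def)
  show ?thesis
    using gather spread \<open>M \<le> B\<close> \<open>B < 1\<close> by (intro exI[of _ B]) (simp add: two_level_gap_def F_def)
qed

lemma sum_entropy_gap_critical_nonneg:
  assumes n: "2 \<le> n" and I: "finite I" "card I \<le> n"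
    and \<theta>: "\<forall>i\<in>I. 0 \<le> \<theta> i" "sum \<theta> I = 1"
  shows "0 \<le> (\<Sum>i\<in>I. entropy_gap (critical_coeff n) (\<theta> i))"
proof -
  have "I \<noteq> {}"
    using \<theta>(2) by auto
  have "Max (\<theta> ` I) \<in> \<theta> ` I"
    using I \<open>I \<noteq> {}\<close> by simp
  then obtain j where "j \<in> I" "\<theta> j = Max (\<theta> ` I)"
    by auto
  then have j: "j \<in> I" "\<And>i. i \<in> I \<Longrightarrow> \<theta> i \<le> \<theta> j"
    using I by simp_all
  define J where "J = I - {j}"
  have "finite J"
    using I by (simp add: J_def)
  have split_I: "sum g I = g j + sum g J" for g :: "_ \<Rightarrow> real"
    using I j by (simp add: J_def sum.remove)
  have \<theta>J: "\<forall>i\<in>J. 0 \<le> \<theta> i \<and> \<theta> i \<le> \<theta> j" "\<theta> j + sum \<theta> J = 1"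
    using \<theta> j split_I[of \<theta>] by (auto simp: J_def)
  have "0 < card I"
    using I j by (auto simp: card_gt_0_iff)
  then have "card J + 1 \<le> n"
    using I j by (simp add: J_def)
  then have "real (card J) \<le> real n - 1"
    by linarith
  have "sum \<theta> I \<le> real (card I) * \<theta> j"
    using sum_mono[of I \<theta> "\<lambda>_. \<theta> j"] j by simp
  also have "\<dots> \<le> real n * \<theta> j"
    using I j \<theta> by (intro mult_right_mono) auto
  finally have "1 / real n \<le> \<theta> j"
    using \<theta> n by (simp add: field_simps)
  show ?thesis
  proof (cases "\<theta> j = 1")
    case True
    then have "\<forall>i\<in>J. \<theta> i = 0"
      using \<theta>J sum_nonneg_eq_0_iff[OF \<open>finite J\<close>, of \<theta>] by auto
    then show ?thesis
      using split_I[of "\<lambda>i. entropy_gap (critical_coeff n) (\<theta> i)"] True by simp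
  next
    case False
    moreover have "0 \<le> sum \<theta> J"
      using \<theta>J(1) by (simp add: sum_nonneg)
    ultimately have "\<theta> j < 1"
      using \<theta>J(2) by linarith
    then obtain B where "\<theta> j \<le> B" "B < 1"
      and "two_level_gap (real n) (critical_coeff n) B
        \<le> entropy_gap (critical_coeff n) (\<theta> j) + (\<Sum>i\<in>J. entropy_gap (critical_coeff n) (\<theta> i))"
      using entropy_gap_reduce_to_two_level[OF critical_coeff_pos[OF n] \<open>finite J\<close>
          \<open>real (card J) \<le> real n - 1\<close> \<theta>J \<open>\<theta> j < 1\<close>]
      by blast
    moreover have "0 \<le> two_level_gap (real n) (critical_coeff n) B"
      using two_level_gap_critical_nonneg[OF n] \<open>1 / real n \<le> \<theta> j\<close> \<open>\<theta> j \<le> B\<close> \<open>B < 1\<close> by simp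
    ultimately show ?thesis
      using split_I[of "\<lambda>i. entropy_gap (critical_coeff n) (\<theta> i)"] by simp
  qed
qed

section \<open>Gibbs' inequality and the normalized bound\<close>

lemma binary_gibbs:
  fixes c t :: real
  assumes "0 < c" "c < 1" "0 < t" "t \<le> 1"
  shows "t * ln c + (1 - t) * ln (1 - c) \<le> t * ln t + (1 - t) * ln (1 - t)"
proof -
  have "t * (ln c - ln t) = t * ln (c / t)"
    using assms by (simp add: ln_div)
  also have "\<dots> \<le> t * (c / t - 1)"
    using assms by (intro mult_left_mono ln_le_minus_one) auto
  also have "\<dots> = c - t"
    using assms by (simp add: field_simps)
  finally have first: "t * (ln c - ln t) \<le> c - t" .
  have "(1 - t) * (ln (1 - c) - ln (1 - t)) \<le> t - c"
  proof (cases "t = 1")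
    case False
    then have "(1 - t) * (ln (1 - c) - ln (1 - t)) = (1 - t) * ln ((1 - c) / (1 - t))"
      using assms by (simp add: ln_div)
    also have "\<dots> \<le> (1 - t) * ((1 - c) / (1 - t) - 1)"
      using assms False by (intro mult_left_mono ln_le_minus_one) auto
    also have "\<dots> = t - c"
      using False by (simp add: field_simps)
    finally show ?thesis .
  qed (use assms in simp)
  with first show ?thesis
    by (simp add: algebra_simps)
qed

lemma mult_ln_sum_powr_eq:
  fixes T :: "'a \<Rightarrow> real"
  assumes "finite I" "\<forall>i\<in>I. 0 \<le> T i" "0 < m"
    and g: "g = (\<Sum>i\<in>I. T i powr (1 / m))" "0 < g" and \<theta>: "\<theta> = (\<lambda>i. T i powr (1 / m) / g)"
  shows "m * ln g = (\<Sum>i\<in>I. \<theta> i * ln (T i)) - m * (\<Sum>i\<in>I. \<theta> i * ln (\<theta> i))"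
proof -
  have "\<theta> i * ln (T i) = \<theta> i * (m * ln g + m * ln (\<theta> i))" if "i \<in> I" for i
  proof (cases "\<theta> i = 0")
    case False
    then have "0 < T i" "0 < \<theta> i"
      using \<theta> \<open>0 < g\<close> \<open>\<forall>i\<in>I. 0 \<le> T i\<close> that by (auto simp: less_le)
    then have "ln (T i) / m = ln g + ln (\<theta> i)"
      using \<theta> \<open>0 < g\<close> by (simp add: ln_div ln_powr)
    then show ?thesis
      using \<open>0 < m\<close> by (simp add: field_simps)
  qed simp
  then have "(\<Sum>i\<in>I. \<theta> i * ln (T i)) = sum \<theta> I * (m * ln g) + m * (\<Sum>i\<in>I. \<theta> i * ln (\<theta> i))"
    by (simp add: sum.distrib sum_distrib_left sum_distrib_right algebra_simps cong: sum.cong)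
  moreover have "sum \<theta> I = 1"
    using g \<theta> by (simp add: sum_divide_distrib[symmetric])
  ultimately show ?thesis
    by simp
qed

lemma sum_ln_prod_compl_le:
  fixes c \<theta> :: "'a \<Rightarrow> real"
  assumes I: "finite I" and c: "\<forall>i\<in>I. 0 \<le> c i \<and> c i < 1"
    and \<theta>: "\<forall>i\<in>I. 0 \<le> \<theta> i" "sum \<theta> I = 1" and supp: "\<forall>i\<in>I. \<theta> i \<noteq> 0 \<longrightarrow> 0 < c i"
  shows "(\<Sum>i\<in>I. \<theta> i * ln (c i * (\<Prod>k\<in>I - {i}. 1 - c k)))
    \<le> (\<Sum>i\<in>I. \<theta> i * ln (\<theta> i) + (1 - \<theta> i) * ln (1 - \<theta> i))"
proof -
  define l where "l k = ln (1 - c k)" for k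
  have "\<theta> i * ln (c i * (\<Prod>k\<in>I - {i}. 1 - c k)) = \<theta> i * (ln (c i) + (sum l I - l i))"
    if "i \<in> I" for i
  proof (cases "\<theta> i = 0")
    case False
    then have "0 < c i"
      using supp that by auto
    moreover have "0 < (\<Prod>k\<in>I - {i}. 1 - c k)"
      using c by (intro prod_pos) auto
    ultimately have "ln (c i * (\<Prod>k\<in>I - {i}. 1 - c k)) = ln (c i) + ln (\<Prod>k\<in>I - {i}. 1 - c k)"
      by (rule ln_mult_pos)
    also have "ln (\<Prod>k\<in>I - {i}. 1 - c k) = (\<Sum>k\<in>I - {i}. l k)"
      unfolding l_def using I c by (intro ln_prod) auto
    also have "\<dots> = sum l I - l i"
      using I that by (simp add: sum_diff1)
    finally show ?thesis
      by simp
  qed simp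
  then have "(\<Sum>i\<in>I. \<theta> i * ln (c i * (\<Prod>k\<in>I - {i}. 1 - c k)))
      = (\<Sum>i\<in>I. \<theta> i * (ln (c i) + (sum l I - l i)))"
    by (rule sum.cong[OF refl])
  also have "\<dots> = (\<Sum>i\<in>I. \<theta> i * ln (c i)) + sum \<theta> I * sum l I - (\<Sum>i\<in>I. \<theta> i * l i)"
    by (simp add: sum.distrib sum_subtractf sum_distrib_right algebra_simps)
  also have "\<dots> = (\<Sum>i\<in>I. \<theta> i * ln (c i) + (1 - \<theta> i) * ln (1 - c i))"
    using \<theta>(2) by (simp add: l_def sum.distrib sum_subtractf algebra_simps)
  also have "\<dots> \<le> (\<Sum>i\<in>I. \<theta> i * ln (\<theta> i) + (1 - \<theta> i) * ln (1 - \<theta> i))"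
  proof (rule sum_mono)
    fix i assume i: "i \<in> I"
    show "\<theta> i * ln (c i) + (1 - \<theta> i) * ln (1 - c i) \<le> \<theta> i * ln (\<theta> i) + (1 - \<theta> i) * ln (1 - \<theta> i)"
    proof (cases "\<theta> i = 0")
      case False
      have "\<theta> i \<le> 1"
        using member_le_sum[OF i _ I, of \<theta>] \<theta> by simp
      then show ?thesis
        using binary_gibbs[of "c i" "\<theta> i"] False supp c \<theta> i by force
    qed (use c i in simp)
  qed
  finally show ?thesis .
qed

lemma mult_ln_sum_powr_prod_compl_le:
  fixes c :: "'a \<Rightarrow> real"
  assumes I: "finite I" and c: "\<forall>i\<in>I. 0 \<le> c i \<and> c i < 1" and "0 < m"
    and g: "g = (\<Sum>i\<in>I. (c i * (\<Prod>k\<in>I - {i}. 1 - c k)) powr (1 / m))" "0 < g"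
    and \<theta>: "\<theta> = (\<lambda>i. (c i * (\<Prod>k\<in>I - {i}. 1 - c k)) powr (1 / m) / g)"
  shows "m * ln g \<le> - (\<Sum>i\<in>I. entropy_gap (m - 1) (\<theta> i))"
proof -
  have nonneg: "\<forall>i\<in>I. 0 \<le> \<theta> i" "sum \<theta> I = 1"
    using g by (simp_all add: \<theta> flip: sum_divide_distrib)
  have "\<forall>i\<in>I. \<theta> i \<noteq> 0 \<longrightarrow> 0 < c i"
    using c by (auto simp: \<theta> less_le)
  then have "(\<Sum>i\<in>I. \<theta> i * ln (c i * (\<Prod>k\<in>I - {i}. 1 - c k)))
      \<le> (\<Sum>i\<in>I. \<theta> i * ln (\<theta> i) + (1 - \<theta> i) * ln (1 - \<theta> i))"
    by (rule sum_ln_prod_compl_le[OF I c nonneg])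
  moreover have "m * ln g = (\<Sum>i\<in>I. \<theta> i * ln (c i * (\<Prod>k\<in>I - {i}. 1 - c k)))
      - m * (\<Sum>i\<in>I. \<theta> i * ln (\<theta> i))"
    using c \<open>0 < m\<close>
    by (intro mult_ln_sum_powr_eq[OF I _ _ g \<theta>]) (auto intro!: mult_nonneg_nonneg prod_nonneg)
  ultimately show ?thesis
    by (simp add: entropy_gap_def sum.distrib sum_subtractf sum_distrib_left algebra_simps)
qed

lemma sum_powr_prod_compl_le_1:
  fixes c :: "'a \<Rightarrow> real"
  assumes n: "2 \<le> n" and I: "finite I" "card I \<le> n" and c: "\<forall>i\<in>I. 0 \<le> c i \<and> c i \<le> 1"
  shows "(\<Sum>i\<in>I. (c i * (\<Prod>k\<in>I - {i}. 1 - c k)) powr (1 / (1 + critical_coeff n))) \<le> 1"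
    (is "?g \<le> 1")
proof (cases "\<exists>j\<in>I. c j = 1")
  case True
  then obtain j where j: "j \<in> I" "c j = 1"
    by auto
  have zero: "c i * (\<Prod>k\<in>I - {i}. 1 - c k) = 0" if "i \<in> I - {j}" for i
    using that j I by (auto intro!: prod_zero)
  have "?g = (\<Prod>k\<in>I - {j}. 1 - c k) powr (1 / (1 + critical_coeff n))"
    by (subst sum.remove[OF I(1) j(1)]) (simp add: zero j(2))
  also have "\<dots> \<le> 1"
  proof (rule powr_le1)
    have "0 \<le> (\<Prod>k\<in>I - {j}. 1 - c k)" "(\<Prod>k\<in>I - {j}. 1 - c k) \<le> 1"
      using c by (auto intro!: prod_nonneg prod_le_1)
    then show "\<bar>\<Prod>k\<in>I - {j}. 1 - c k\<bar> \<le> 1"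
      by simp
  qed (use critical_coeff_pos[OF n] in simp)
  finally show ?thesis .
next
  case False
  then have c': "\<forall>i\<in>I. 0 \<le> c i \<and> c i < 1"
    using c by force
  have "0 \<le> ?g"
    by (intro sum_nonneg) simp
  show ?thesis
  proof (cases "?g = 0")
    case False
    define \<theta> where "\<theta> = (\<lambda>i. (c i * (\<Prod>k\<in>I - {i}. 1 - c k)) powr (1 / (1 + critical_coeff n)) / ?g)"
    have "\<forall>i\<in>I. 0 \<le> \<theta> i" "sum \<theta> I = 1"
      using False \<open>0 \<le> ?g\<close> by (simp_all add: \<theta>_def flip: sum_divide_distrib)
    then have "0 \<le> (\<Sum>i\<in>I. entropy_gap (critical_coeff n) (\<theta> i))"
      by (rule sum_entropy_gap_critical_nonneg[OF n I])
    moreover have "(1 + critical_coeff n) * ln ?g \<le> - (\<Sum>i\<in>I. entropy_gap (critical_coeff n) (\<theta> i))"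
      using mult_ln_sum_powr_prod_compl_le[OF I(1) c' _ refl _ \<theta>_def] critical_coeff_pos[OF n]
        False \<open>0 \<le> ?g\<close>
      by simp
    ultimately have "ln ?g \<le> 0"
      using mult_pos_pos[of "1 + critical_coeff n" "ln ?g"] critical_coeff_pos[OF n] by fastforce
    then show ?thesis
      using False \<open>0 \<le> ?g\<close> by simp
  qed simp
qed

lemma powr_prod_diff_eq:
  fixes d r :: "'a \<Rightarrow> real"
  assumes "finite R" "i \<in> R" and dr: "\<forall>k\<in>R. 0 < r k \<and> 0 \<le> d k \<and> d k \<le> r k"
  shows "d i powr x * (\<Prod>k\<in>R - {i}. (r k - d k) powr x)
    = (\<Prod>k\<in>R. r k powr x) * (d i / r i * (\<Prod>k\<in>R - {i}. 1 - d k / r k)) powr x"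
proof -
  have "(r k - d k) powr x = r k powr x * (1 - d k / r k) powr x" if "k \<in> R" for k
  proof -
    have "0 < r k"
      using dr that by blast
    then have "r k - d k = r k * (1 - d k / r k)"
      by (simp add: field_simps)
    then show ?thesis
      using dr that by (simp add: powr_mult)
  qed
  then have "(\<Prod>k\<in>R - {i}. (r k - d k) powr x) = (\<Prod>k\<in>R - {i}. r k powr x * (1 - d k / r k) powr x)"
    by (intro prod.cong) auto
  also have "\<dots> = (\<Prod>k\<in>R - {i}. r k powr x) * (\<Prod>k\<in>R - {i}. 1 - d k / r k) powr x"
    by (simp add: prod.distrib prod_powr_distrib)
  finally have "(\<Prod>k\<in>R - {i}. (r k - d k) powr x)
      = (\<Prod>k\<in>R - {i}. r k powr x) * (\<Prod>k\<in>R - {i}. 1 - d k / r k) powr x" .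
  moreover have "0 < r i" "0 \<le> d i"
    using dr assms(2) by auto
  then have "d i powr x = r i powr x * (d i / r i) powr x"
    by (simp add: powr_mult[symmetric])
  moreover have "(\<Prod>k\<in>R. r k powr x) = r i powr x * (\<Prod>k\<in>R - {i}. r k powr x)"
    using assms(1,2) by (simp add: prod.remove)
  moreover have "(d i / r i * (\<Prod>k\<in>R - {i}. 1 - d k / r k)) powr x
      = (d i / r i) powr x * (\<Prod>k\<in>R - {i}. 1 - d k / r k) powr x"
    by (rule powr_mult)
  ultimately show ?thesis
    by (simp add: mult_ac)
qed

lemma sum_powr_prod_diff_le:
  fixes d r :: "'a \<Rightarrow> real"
  assumes n: "2 \<le> n" and R: "finite R" "card R \<le> n" and dr: "\<forall>k\<in>R. 0 \<le> d k \<and> d k \<le> r k"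
  shows "(\<Sum>i\<in>R. d i powr (1 / (1 + critical_coeff n))
      * (\<Prod>k\<in>R - {i}. (r k - d k) powr (1 / (1 + critical_coeff n))))
    \<le> (\<Prod>k\<in>R. r k powr (1 / (1 + critical_coeff n)))"
proof (cases "\<exists>k\<in>R. r k = 0")
  case True
  then obtain k where k: "k \<in> R" "r k = 0"
    by auto
  then have "d k = 0"
    using dr by force
  have zero: "d i powr x * (\<Prod>k\<in>R - {i}. (r k - d k) powr x) = 0" for i x
  proof (cases "i = k")
    case False
    then have "(\<Prod>k\<in>R - {i}. (r k - d k) powr x) = 0"
      using R k \<open>d k = 0\<close> by (intro prod_zero bexI[of _ k]) auto
    then show ?thesis
      by simp
  qed (simp add: \<open>d k = 0\<close>)
  then show ?thesis
    by (simp only: zero sum.neutral_const) (simp add: prod_nonneg)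
next
  case False
  define x where "x = 1 / (1 + critical_coeff n)"
  have dr': "\<forall>k\<in>R. 0 < r k \<and> 0 \<le> d k \<and> d k \<le> r k"
    using False dr by force
  have c: "\<forall>k\<in>R. 0 \<le> d k / r k \<and> d k / r k \<le> 1"
    using dr' by (auto simp: field_simps)
  have "(\<Sum>i\<in>R. d i powr x * (\<Prod>k\<in>R - {i}. (r k - d k) powr x))
      = (\<Prod>k\<in>R. r k powr x) * (\<Sum>i\<in>R. (d i / r i * (\<Prod>k\<in>R - {i}. 1 - d k / r k)) powr x)"
    using powr_prod_diff_eq[OF R(1) _ dr'] by (simp add: sum_distrib_left)
  also have "\<dots> \<le> (\<Prod>k\<in>R. r k powr x)"
    using sum_powr_prod_compl_le_1[OF n R c, folded x_def]
    by (rule mult_left_le) (simp add: prod_nonneg)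
  finally show ?thesis
    by (simp add: x_def)
qed

section \<open>Permanents of rectangular arrays\<close>

definition injections :: "'a set \<Rightarrow> 'b set \<Rightarrow> ('a \<Rightarrow> 'b) set" where
  "injections R C = {f \<in> R \<rightarrow>\<^sub>E C. inj_on f R}"

definition per_on :: "'a set \<Rightarrow> 'b set \<Rightarrow> ('a \<Rightarrow> 'b \<Rightarrow> 'c::comm_semiring_1) \<Rightarrow> 'c" where
  "per_on R C B = (\<Sum>f\<in>injections R C. \<Prod>i\<in>R. B i (f i))"

lemma finite_injections: "finite R \<Longrightarrow> finite C \<Longrightarrow> finite (injections R C)"
  unfolding injections_def by (rule finite_subset[OF _ finite_PiE[of R "\<lambda>_. C"]]) auto

lemma injections_image:
  assumes "finite C" "card R = card C" "f \<in> injections R C"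
  shows "f ` R = C"
proof -
  have "f ` R \<subseteq> C" "inj_on f R"
    using assms(3) by (auto simp: injections_def)
  then show ?thesis
    using assms(1,2) by (intro card_subset_eq) (auto simp: card_image)
qed

lemma per_on_empty [simp]: "per_on {} {} B = 1"
  by (simp add: per_on_def injections_def)

lemma bij_betw_injections_fun_upd:
  assumes "i \<in> R" "j \<in> C"
  shows "bij_betw (\<lambda>g. g(i := j)) (injections (R - {i}) (C - {j})) {f \<in> injections R C. f i = j}"
proof (rule bij_betw_byWitness[where f' = "\<lambda>f. f(i := undefined)"])
  show "\<forall>g\<in>injections (R - {i}) (C - {j}). (g(i := j))(i := undefined) = g"
    by (auto simp: injections_def PiE_def extensional_def)
  show "\<forall>f\<in>{f \<in> injections R C. f i = j}. (f(i := undefined))(i := j) = f"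
    by auto
  show "(\<lambda>g. g(i := j)) ` injections (R - {i}) (C - {j}) \<subseteq> {f \<in> injections R C. f i = j}"
  proof (rule image_subsetI)
    fix g assume "g \<in> injections (R - {i}) (C - {j})"
    then have g: "g \<in> (R - {i}) \<rightarrow>\<^sub>E (C - {j})" "inj_on g (R - {i})"
      by (auto simp: injections_def)
    then have "inj_on (g(i := j)) (insert i (R - {i}))"
      unfolding inj_on_insert by (auto simp: inj_on_def Pi_iff)
    moreover have "g(i := j) \<in> R \<rightarrow>\<^sub>E C"
      using g assms by (auto simp: PiE_def extensional_def Pi_iff)
    ultimately show "g(i := j) \<in> {f \<in> injections R C. f i = j}"
      using assms by (simp add: injections_def insert_absorb)
  qed
  show "(\<lambda>f. f(i := undefined)) ` {f \<in> injections R C. f i = j} \<subseteq> injections (R - {i}) (C - {j})"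
    using assms by (auto simp: injections_def PiE_def extensional_def inj_on_def)
qed

lemma per_on_expand_column:
  assumes R: "finite R" and C: "finite C" and card: "card R = card C" and j: "j \<in> C"
  shows "per_on R C B = (\<Sum>i\<in>R. B i j * per_on (R - {i}) (C - {j}) B)"
proof -
  define P where "P f = (\<Prod>k\<in>R. B k (f k))" for f
  have cover: "injections R C = (\<Union>i\<in>R. {f \<in> injections R C. f i = j})"
    using injections_image[OF C card] j by blast
  have "per_on R C B = sum P (injections R C)"
    by (simp add: per_on_def P_def)
  also have "\<dots> = sum P (\<Union>i\<in>R. {f \<in> injections R C. f i = j})"
    by (rule arg_cong[OF cover])
  also have "\<dots> = (\<Sum>i\<in>R. \<Sum>f\<in>{f \<in> injections R C. f i = j}. P f)"
  proof (rule sum.UNION_disjoint_family)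
    show "\<forall>i\<in>R. finite {f \<in> injections R C. f i = j}"
      using finite_injections[OF R C] by simp
    show "disjoint_family_on (\<lambda>i. {f \<in> injections R C. f i = j}) R"
      by (auto simp: disjoint_family_on_def injections_def dest: inj_onD)
  qed (rule R)
  also have "\<dots> = (\<Sum>i\<in>R. B i j * per_on (R - {i}) (C - {j}) B)"
  proof (rule sum.cong[OF refl])
    fix i assume i: "i \<in> R"
    have "(\<Sum>f\<in>{f \<in> injections R C. f i = j}. P f)
        = (\<Sum>g\<in>injections (R - {i}) (C - {j}). P (g(i := j)))"
      by (rule sum.reindex_bij_betw[OF bij_betw_injections_fun_upd[OF i j], symmetric])
    also have "\<dots> = (\<Sum>g\<in>injections (R - {i}) (C - {j}). B i j * (\<Prod>k\<in>R - {i}. B k (g k)))"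
    proof (rule sum.cong[OF refl])
      fix g
      have "(\<Prod>k\<in>R - {i}. B k ((g(i := j)) k)) = (\<Prod>k\<in>R - {i}. B k (g k))"
        by (rule prod.cong) auto
      then show "P (g(i := j)) = B i j * (\<Prod>k\<in>R - {i}. B k (g k))"
        unfolding P_def using R i by (simp add: prod.remove)
    qed
    finally show "(\<Sum>f\<in>{f \<in> injections R C. f i = j}. P f) = B i j * per_on (R - {i}) (C - {j}) B"
      by (simp add: per_on_def sum_distrib_left)
  qed
  finally show ?thesis .
qed

lemma per_eq_per_on: "per n B = per_on {..<n} {..<n} B"
proof -
  define S where "S = {..<n}"
  have "per n B = (\<Sum>\<sigma> | \<sigma> permutes S. \<Prod>i\<in>S. B i (\<sigma> i))"
    by (simp add: per_def S_def atLeast0LessThan)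
  also have "\<dots> = (\<Sum>f\<in>injections S S. \<Prod>i\<in>S. B i (f i))"
  proof (rule sum.reindex_bij_witness[where i = "\<lambda>f x. if x \<in> S then f x else x"
        and j = "\<lambda>\<sigma>. restrict \<sigma> S"])
    fix \<sigma> assume "\<sigma> \<in> {\<sigma>. \<sigma> permutes S}"
    then have \<sigma>: "\<sigma> permutes S"
      by simp
    show "(\<lambda>x. if x \<in> S then restrict \<sigma> S x else x) = \<sigma>"
      using \<sigma> by (auto simp: permutes_not_in)
    show "restrict \<sigma> S \<in> injections S S"
      using \<sigma>
      by (auto simp: injections_def permutes_in_image inj_on_def permutes_inj_on[THEN inj_onD])
    show "(\<Prod>i\<in>S. B i (restrict \<sigma> S i)) = (\<Prod>i\<in>S. B i (\<sigma> i))"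
      by simp
  next
    fix f assume f: "f \<in> injections S S"
    then have "f \<in> S \<rightarrow>\<^sub>E S" "bij_betw f S S"
      using injections_image[of S S f] by (auto simp: injections_def bij_betw_def S_def)
    then show "restrict (\<lambda>x. if x \<in> S then f x else x) S = f"
      by (auto simp: restrict_def PiE_def extensional_def)
    have "bij_betw (\<lambda>x. if x \<in> S then f x else x) S S"
      using \<open>bij_betw f S S\<close> by (rule bij_betw_cong[THEN iffD1, rotated]) auto
    then show "(\<lambda>x. if x \<in> S then f x else x) \<in> {\<sigma>. \<sigma> permutes S}"
      by (auto intro: bij_imp_permutes)
  qed
  finally show ?thesis
    by (simp add: per_on_def S_def)
qed

lemma per_on_powr_le_prod_row_sums:
  fixes a :: "'a \<Rightarrow> 'b \<Rightarrow> real"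
  assumes n: "2 \<le> n" and "finite R" "finite C" "card R = card C" "card R \<le> n"
    and "\<forall>i\<in>R. \<forall>j\<in>C. 0 \<le> a i j"
  shows "per_on R C (\<lambda>i j. a i j powr (1 / (1 + critical_coeff n)))
    \<le> (\<Prod>i\<in>R. (\<Sum>j\<in>C. a i j) powr (1 / (1 + critical_coeff n)))"
  using assms(2-)
proof (induction "card R" arbitrary: R C)
  case 0
  then show ?case
    by simp
next
  case (Suc m)
  define x where "x = 1 / (1 + critical_coeff n)"
  have "card C = Suc m"
    using Suc.hyps(2) Suc.prems(3) by simp
  then obtain j where j: "j \<in> C"
    by fastforce
  have "per_on R C (\<lambda>i j. a i j powr x)
      = (\<Sum>i\<in>R. a i j powr x * per_on (R - {i}) (C - {j}) (\<lambda>i j. a i j powr x))"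
    using Suc.prems(1-3) j by (rule per_on_expand_column)
  also have "\<dots> \<le> (\<Sum>i\<in>R. a i j powr x * (\<Prod>k\<in>R - {i}. (\<Sum>l\<in>C - {j}. a k l) powr x))"
  proof (intro sum_mono mult_left_mono)
    fix i assume i: "i \<in> R"
    show "per_on (R - {i}) (C - {j}) (\<lambda>i j. a i j powr x)
        \<le> (\<Prod>k\<in>R - {i}. (\<Sum>l\<in>C - {j}. a k l) powr x)"
      unfolding x_def using Suc i j by (intro Suc.hyps(1)) auto
  qed simp
  also have "\<dots> = (\<Sum>i\<in>R. a i j powr x * (\<Prod>k\<in>R - {i}. ((\<Sum>l\<in>C. a k l) - a k j) powr x))"
    using Suc.prems(2) j by (simp add: sum_diff1)
  also have "\<dots> \<le> (\<Prod>k\<in>R. (\<Sum>l\<in>C. a k l) powr x)"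
    unfolding x_def using Suc.prems j
    by (intro sum_powr_prod_diff_le[OF n]) (auto intro: member_le_sum)
  finally show ?case
    by (simp add: x_def)
qed

theorem proposition1p4:
  fixes n :: nat and A :: "nat \<Rightarrow> nat \<Rightarrow> real" and p0 :: real
  assumes "n \<ge> 2"
    and "p0 = (real n * ln (real n) - (real n - 1) * ln (real n - 1)) / ln (real n)"
    and "\<And>i j. i < n \<Longrightarrow> j < n \<Longrightarrow> A i j \<ge> 0"
    and "\<And>i. i < n \<Longrightarrow> (\<Sum>j<n. A i j) = 1"
  shows "per n (\<lambda>i j. A i j powr (1 / p0)) \<le> 1"
proof -
  have "p0 = 1 + critical_coeff n"
    using assms(1,2) by (simp add: critical_coeff_def field_simps)
  then have "per n (\<lambda>i j. A i j powr (1 / p0))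
      = per_on {..<n} {..<n} (\<lambda>i j. A i j powr (1 / (1 + critical_coeff n)))"
    by (simp add: per_eq_per_on)
  also have "\<dots> \<le> (\<Prod>i<n. (\<Sum>j<n. A i j) powr (1 / (1 + critical_coeff n)))"
    using assms(1,3) by (intro per_on_powr_le_prod_row_sums) auto
  also have "\<dots> = 1"
    using assms(4) by simp
  finally show ?thesis .
qed

end
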